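(* Let $\mathbb{F}_q$ be a finite field and $\chi$ its canonical additive character. The eigenvalues (listed with multiplicity) of the adjacency matrix of the special unit-graph on $\operatorname{Mat}_2(\mathbb{F}_q)$ are: $\lambda = q^3 - q$ with multiplicity $1$; $\mu_0 = -q$ with multiplicity $q^3+q^2-q-1$; and, for each $\delta \in \mathbb{F}_q^{\ast}$, $\mu_\delta = q\sum_{\alpha \in \mathbb{F}_q^{\ast}} \chi(\alpha + \delta\alpha^{-1})$ with multiplicity $q^3 - q$.
   Context: The special unit-graph on $\operatorname{Mat}_2(\mathbb{F}_q)$ is the Cayley graph $\operatorname{Cay}(\operatorname{Mat}_2(\mathbb{F}_q), \operatorname{SL}_2(\mathbb{F}_q))$: vertex set $\operatorname{Mat}_2(\mathbb{F}_q)$, with $A$ adjacent to $B$ iff $\det(B-A)=1$ (this relation is symmetric for $2\times 2$ matrices). The canonical additive character of $\mathbb{F}_q$, where $q=p^m$ with $p$ prime, is $\chi(x) = \exp(2\pi i \operatorname{Tr}_{\mathbb{F}_q/\mathbb{F}_p}(x)/p)$. *)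

theory Defs
  imports "HOL-Analysis.Analysis"
begin

text \<open>Finite field F_q is modelled as a type 'a of class {finite, field};
  q = CARD('a), p = CHAR('a), and q = p^m.\<close>

definition fq_degree :: "'a::{finite,field} itself \<Rightarrow> nat" where
  "fq_degree T = (THE m. CARD('a) = CHAR('a) ^ m)"

definition fq_trace :: "'a::{finite,field} \<Rightarrow> 'a" where
  "fq_trace x = (\<Sum>i<fq_degree TYPE('a). x ^ (CHAR('a) ^ i))"

definition canonical_char :: "'a::{finite,field} \<Rightarrow> complex" where
  "canonical_char x =
     (let k = (THE k. k < CHAR('a) \<and> of_nat k = fq_trace x)
      in exp (2 * pi * \<i> * of_nat k / of_nat CHAR('a)))"

text \<open>Adjacency matrix of the special unit-graph Cay(Mat_2(F_q), SL_2(F_q)):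
  vertices are 2x2 matrices over 'a, A adjacent to B iff det (B - A) = 1.\<close>
definition special_unit_adj :: "complex ^ ('a::{finite,field} ^ 2 ^ 2) ^ ('a ^ 2 ^ 2)" where
  "special_unit_adj = (\<chi> A B. if det (B - A) = (1::'a) then 1 else 0)"

definition char_poly_mat :: "complex ^ 'n ^ 'n \<Rightarrow> complex poly" where
  "char_poly_mat M = det (\<chi> i j. (if i = j then [:0, 1:] else 0) - [: M $ i $ j :])"

end

theory Submission
  imports Defs "HOL-Algebra.Sylow" "HOL-Algebra.Multiplicative_Group"
begin

text \<open>
  The adjacency matrix of a Cayley graph on the additive group of \<open>Mat\<^sub>2(F\<^sub>q)\<close> is diagonalised
  by the additive characters \<open>A \<mapsto> \<chi>(\<langle>A, B\<rangle>)\<close>, \<open>\<langle>A, B\<rangle> = \<Sum>\<^sub>i\<^sub>j A\<^sub>i\<^sub>j B\<^sub>i\<^sub>j\<close>; the eigenvalue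
  belonging to \<open>B\<close> is \<open>\<lambda>\<^sub>B = \<Sum>\<^bsub>det S = 1\<^esub> \<chi>(\<langle>S, B\<rangle>)\<close>, and the character matrix is invertible by
  orthogonality. Detecting \<open>det S = 1\<close> by \<open>q\<^sup>-\<^sup>1 \<Sum>\<^sub>t \<chi>(t (det S - 1))\<close> splits \<open>\<lambda>\<^sub>B\<close> into two
  Gauss-type sums over pairs of entries, which evaluate to
  \<open>\<lambda>\<^sub>B = q\<^sup>3 [B = 0] + q K(det B)\<close> with the Kloosterman sum \<open>K(\<Delta>) = \<Sum>\<^sub>\<alpha>\<^sub>\<noteq>\<^sub>0 \<chi>(\<alpha> + \<Delta>/\<alpha>)\<close>.
  Since \<open>K(0) = -1\<close>, the multiplicities are the numbers of matrices of each determinant,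
  which the same character sum computes for \<open>B = 0\<close>.
\<close>

section \<open>Finite fields\<close>

lemma prime_CHAR_finite_field: "prime CHAR('a::{finite,field})"
  by (rule prime_CHAR_semidom) (rule finite_imp_CHAR_pos, simp)

lemma one_less_CHAR_finite_field: "CHAR('a::{finite,field}) > 1"
  using prime_CHAR_finite_field[where 'a='a] prime_gt_1_nat by blast

definition additive_group :: "'a::ab_group_add itself \<Rightarrow> 'a monoid" where
  "additive_group T = \<lparr>carrier = UNIV, monoid.mult = (+), one = 0\<rparr>"

definition multiplicative_group :: "'a::field itself \<Rightarrow> 'a monoid" where
  "multiplicative_group T = \<lparr>carrier = UNIV - {0}, monoid.mult = (*), one = 1\<rparr>"

lemma group_additive_group: "group (additive_group TYPE('a::ab_group_add))"
  unfolding additive_group_def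
  by (rule groupI) (auto simp: add.assoc intro: exI[of _ "- x" for x])

lemma group_multiplicative_group: "group (multiplicative_group TYPE('a::field))"
  unfolding multiplicative_group_def
  by (rule groupI) (auto simp: mult.assoc Bex_def intro: exI[of _ "inverse x" for x])

lemma additive_group_pow:
  fixes x :: "'a::ring_1"
  shows "x [^]\<^bsub>(additive_group TYPE('a))\<lparr>carrier := H\<rparr>\<^esub> (n::nat) = of_nat n * x"
  by (induction n) (simp_all add: additive_group_def distrib_right)

lemma multiplicative_group_pow:
  fixes x :: "'a::field"
  shows "x [^]\<^bsub>multiplicative_group TYPE('a)\<^esub> (n::nat) = x ^ n"
  by (induction n) (simp_all add: multiplicative_group_def mult.commute)

text \<open>A Sylow \<open>r\<close>-subgroup of \<open>(F, +)\<close> has a nonzero element killed by a power of \<open>r\<close>.\<close>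
lemma prime_dvd_card_imp_eq_CHAR:
  fixes r :: nat
  assumes r: "prime r" "r dvd CARD('a::{finite,field})"
  shows "r = CHAR('a)"
proof -
  let ?G = "additive_group TYPE('a)"
  define a where "a = multiplicity r CARD('a)"
  have "r ^ a dvd CARD('a)"
    unfolding a_def by (rule multiplicity_dvd)
  then obtain m where "CARD('a) = r ^ a * m"
    by blast
  then have "order ?G = r ^ a * m"
    by (simp add: order_def additive_group_def)
  then obtain H where H: "subgroup H ?G" "card H = r ^ a"
    using sylow_thm[OF r(1) group_additive_group[where 'a='a]] by (auto simp: additive_group_def)
  have "a \<ge> 1"
    unfolding a_def using r by (intro multiplicity_geI) auto
  then have "r ^ 1 \<le> r ^ a"
    using prime_gt_0_nat[OF r(1)] by (intro power_increasing) auto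
  then have "card H \<ge> 2"
    using H(2) prime_ge_2_nat[OF r(1)] by simp
  have "\<exists>x\<in>H. x \<noteq> 0"
  proof (rule ccontr)
    assume "\<not> ?thesis"
    then have "card H \<le> card {0::'a}"
      by (intro card_mono) auto
    then show False
      using \<open>card H \<ge> 2\<close> by simp
  qed
  then obtain x where x: "x \<in> H" "x \<noteq> 0"
    by blast
  interpret GH: group "?G\<lparr>carrier := H\<rparr>"
    using group.subgroup_imp_group[OF group_additive_group H(1)] .
  have "x [^]\<^bsub>?G\<lparr>carrier := H\<rparr>\<^esub> order (?G\<lparr>carrier := H\<rparr>) = \<one>\<^bsub>?G\<lparr>carrier := H\<rparr>\<^esub>"
    by (rule GH.pow_order_eq_1) (simp add: x)
  then have "of_nat (r ^ a) * x = 0"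
    by (simp add: additive_group_pow order_def H(2)) (simp add: additive_group_def)
  then have "of_nat (r ^ a) = (0::'a)"
    using x by simp
  then have "CHAR('a) dvd r ^ a"
    using of_nat_eq_0_iff_char_dvd by blast
  then have "CHAR('a) dvd r"
    using prime_CHAR_finite_field prime_dvd_power by blast
  then show ?thesis
    using r(1) prime_CHAR_finite_field[where 'a='a] by (metis primes_dvd_imp_eq)
qed

lemma ex_card_eq_CHAR_power: "\<exists>m. CARD('a::{finite,field}) = CHAR('a) ^ m"
proof -
  let ?q = "CARD('a)"
  have "?q = (\<Prod>p \<in> prime_factors ?q. p ^ multiplicity p ?q)"
    by (rule prime_factorization_nat) simp
  also have "prime_factors ?q \<subseteq> {CHAR('a)}"
    using prime_dvd_card_imp_eq_CHAR[where 'a='a] by (auto simp: in_prime_factors_iff)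
  then have "(\<Prod>p \<in> prime_factors ?q. p ^ multiplicity p ?q) = CHAR('a) ^ multiplicity CHAR('a) ?q"
    using prime_factorization_nat[of ?q] by (cases "prime_factors ?q = {}") (auto dest: subset_singletonD)
  finally show ?thesis by blast
qed

lemma card_eq_CHAR_power_fq_degree: "CARD('a::{finite,field}) = CHAR('a) ^ fq_degree TYPE('a)"
proof -
  obtain m where m: "CARD('a) = CHAR('a) ^ m"
    using ex_card_eq_CHAR_power by blast
  have "\<exists>!m. CARD('a) = CHAR('a) ^ m"
  proof (rule ex1I[of _ m])
    fix k
    assume "CARD('a) = CHAR('a) ^ k"
    then show "k = m"
      using m one_less_CHAR_finite_field[where 'a='a] power_inject_exp by metis
  qed (rule m)
  then show ?thesis
    unfolding fq_degree_def by (rule theI')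
qed

lemma fq_degree_pos: "fq_degree TYPE('a::{finite,field}) > 0"
proof (rule ccontr)
  assume "\<not> ?thesis"
  then have "CARD('a) = 1"
    using card_eq_CHAR_power_fq_degree[where 'a='a] by simp
  moreover have "card {0::'a, 1} \<le> CARD('a)"
    by (intro card_mono) auto
  ultimately show False by simp
qed

lemma power_card_finite_field: "(x::'a::{finite,field}) ^ CARD('a) = x"
proof (cases "x = 0")
  case False
  let ?M = "multiplicative_group TYPE('a)"
  have "x [^]\<^bsub>?M\<^esub> order ?M = \<one>\<^bsub>?M\<^esub>"
    using False by (intro group.pow_order_eq_1 group_multiplicative_group)
      (simp add: multiplicative_group_def)
  moreover have "order ?M = CARD('a) - 1"
    by (simp add: order_def multiplicative_group_def card_Diff_singleton)
  ultimately have "x ^ (CARD('a) - 1) = 1"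
    by (simp add: multiplicative_group_pow) (simp add: multiplicative_group_def)
  then show ?thesis
    using finite_UNIV_card_ge_0[where 'a='a] by (subst power_eq_if) simp
qed (use finite_UNIV_card_ge_0[where 'a='a] in auto)

lemma of_nat_power_CHAR: "(of_nat k :: 'a::{finite,field}) ^ CHAR('a) = of_nat k"
proof (induction k)
  case 0
  then show ?case using one_less_CHAR_finite_field[where 'a='a] by simp
next
  case (Suc k)
  have "(of_nat (Suc k) :: 'a) ^ CHAR('a) = (of_nat k + 1) ^ CHAR('a)"
    by (simp add: add.commute)
  also have "\<dots> = of_nat k ^ CHAR('a) + 1 ^ CHAR('a)"
    by (rule freshmans_dream) (auto simp: prime_CHAR_finite_field)
  finally
  show ?case using Suc by simp
qed

lemma of_nat_eq_of_nat_less_CHAR_iff: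
  assumes "i < CHAR('a::ring_1)" "j < CHAR('a)"
  shows "(of_nat i :: 'a) = of_nat j \<longleftrightarrow> i = j"
proof -
  have le_case: "i = j" if "i \<le> j" "j < CHAR('a)" "(of_nat i :: 'a) = of_nat j" for i j
  proof -
    have "(of_nat (j - i) :: 'a) = 0"
      using that by (simp add: of_nat_diff)
    then have "CHAR('a) dvd j - i"
      using of_nat_eq_0_iff_char_dvd by blast
    then show ?thesis
      using that by (auto dest: dvd_imp_le)
  qed
  show ?thesis
  proof
    assume eq: "(of_nat i :: 'a) = of_nat j"
    show "i = j"
    proof (cases "i \<le> j")
      case True
      then show ?thesis using le_case eq assms by blast
    next
      case False
      then show ?thesis using le_case[of j i] eq assms by simp
    qed
  qed simp
qed

text \<open>The \<open>p\<close> elements \<open>0, 1, \<dots>, p - 1\<close> already exhaust the roots of \<open>X\<^sup>p - X\<close>.\<close>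
lemma power_CHAR_eq_self_imp_of_nat:
  assumes "(y::'a::{finite,field}) ^ CHAR('a) = y"
  shows "\<exists>k<CHAR('a). y = of_nat k"
proof -
  let ?p = "CHAR('a)"
  define P :: "'a poly" where "P = Polynomial.monom 1 ?p - [:0, 1:]"
  have p1: "?p > 1" by (rule one_less_CHAR_finite_field)
  have "Polynomial.coeff P ?p = 1"
    using p1 by (simp add: P_def coeff_pCons split: nat.split)
  then have "P \<noteq> 0" by auto
  moreover have "degree P \<le> ?p"
    unfolding P_def by (intro degree_diff_le) (use p1 in \<open>auto simp: degree_monom_le\<close>)
  ultimately have card_roots: "card {z. poly P z = 0} \<le> ?p"
    using card_poly_roots_bound by fastforce
  have roots: "poly P z = 0 \<longleftrightarrow> z ^ ?p = z" for z
    by (simp add: P_def poly_monom)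
  have sub: "of_nat ` {..<?p} \<subseteq> {z. poly P z = 0}"
    by (auto simp: roots of_nat_power_CHAR)
  have "card (of_nat ` {..<?p} :: 'a set) = ?p"
    by (subst card_image) (auto intro!: inj_onI simp: of_nat_eq_of_nat_less_CHAR_iff)
  then have "of_nat ` {..<?p} = {z. poly P z = 0}"
    using card_seteq[OF _ sub] card_roots by simp
  then show ?thesis
    using assms roots by auto
qed

lemma fq_trace_add: "fq_trace (x + y) = fq_trace x + fq_trace (y::'a::{finite,field})"
  unfolding fq_trace_def sum.distrib[symmetric]
  by (intro sum.cong refl freshmans_dream') (auto simp: prime_CHAR_finite_field)

lemma fq_trace_power_CHAR: "fq_trace (x::'a::{finite,field}) ^ CHAR('a) = fq_trace x"
proof -
  let ?p = "CHAR('a)" and ?m = "fq_degree TYPE('a)"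
  define f where "f i = x ^ (?p ^ i)" for i
  have "fq_trace x ^ ?p = (\<Sum>i<?m. f (Suc i))"
    unfolding fq_trace_def
    by (subst freshmans_dream_sum)
       (auto simp: prime_CHAR_finite_field f_def power_mult[symmetric] mult.commute)
  also have "f ?m = f 0"
    unfolding f_def using power_card_finite_field[of x] card_eq_CHAR_power_fq_degree[where 'a='a]
    by simp
  then have "(\<Sum>i<?m. f (Suc i)) = (\<Sum>i<?m. f i)"
    using sum.lessThan_Suc_shift[of f ?m] sum.lessThan_Suc[of f ?m] by (simp add: add.commute)
  finally show ?thesis
    by (simp add: f_def fq_trace_def)
qed

text \<open>The trace is a nonzero polynomial of degree \<open>p\<^sup>m\<^sup>-\<^sup>1 < q\<close>, so it cannot vanish on all of \<open>F\<^sub>q\<close>.\<close>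
lemma ex_fq_trace_nonzero: "\<exists>x::'a::{finite,field}. fq_trace x \<noteq> 0"
proof (rule ccontr)
  assume "\<not> ?thesis"
  then have trace_zero: "fq_trace x = 0" for x :: 'a
    by blast
  let ?p = "CHAR('a)" and ?m = "fq_degree TYPE('a)"
  define P :: "'a poly" where "P = (\<Sum>i<?m. Polynomial.monom 1 (?p ^ i))"
  have m0: "?m > 0" by (rule fq_degree_pos)
  have p1: "?p > 1" by (rule one_less_CHAR_finite_field)
  have "Polynomial.coeff P (?p ^ (?m - 1)) = (\<Sum>i<?m. if ?p ^ i = ?p ^ (?m - 1) then 1 else 0)"
    by (simp add: P_def coeff_sum coeff_monom)
  also have "\<dots> = (\<Sum>i\<in>{?m - 1}. 1)"
    by (rule sum.mono_neutral_cong_right) (use m0 p1 power_inject_exp in auto)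
  finally have "P \<noteq> 0" by auto
  moreover have "degree P \<le> ?p ^ (?m - 1)"
    unfolding P_def
  proof (rule degree_sum_le)
    fix i assume "i \<in> {..<?m}"
    then have "?p ^ i \<le> ?p ^ (?m - 1)"
      using p1 by (intro power_increasing) auto
    then show "degree (Polynomial.monom (1::'a) (?p ^ i)) \<le> ?p ^ (?m - 1)"
      using degree_monom_le le_trans by blast
  qed simp
  moreover have "{z. poly P z = 0} = UNIV"
    using trace_zero by (auto simp: P_def poly_sum poly_monom fq_trace_def)
  ultimately have "CARD('a) \<le> ?p ^ (?m - 1)"
    using card_poly_roots_bound[of P] by simp
  moreover have "?p ^ (?m - 1) < ?p ^ ?m"
    using p1 m0 by (intro power_strict_increasing) auto
  ultimately show False
    using card_eq_CHAR_power_fq_degree[where 'a='a] by simp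
qed

section \<open>The canonical additive character\<close>

abbreviation chi :: "'a::{finite,field} \<Rightarrow> complex" where
  "chi \<equiv> canonical_char"

definition trace_index :: "'a::{finite,field} \<Rightarrow> nat" where
  "trace_index x = (THE k. k < CHAR('a) \<and> of_nat k = fq_trace x)"

lemma trace_index:
  "trace_index x < CHAR('a::{finite,field}) \<and> (of_nat (trace_index x) :: 'a) = fq_trace x"
proof -
  obtain k where k: "k < CHAR('a)" "fq_trace x = of_nat k"
    using power_CHAR_eq_self_imp_of_nat[OF fq_trace_power_CHAR[of x]] by blast
  then have "\<exists>!k. k < CHAR('a) \<and> (of_nat k :: 'a) = fq_trace x"
    by (intro ex1I[of _ k]) (auto simp: of_nat_eq_of_nat_less_CHAR_iff)
  then show ?thesis
    unfolding trace_index_def by (rule theI')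
qed

lemma canonical_char_eq_exp:
  "chi (x::'a::{finite,field}) = exp (2 * pi * \<i> * of_nat (trace_index x) / of_nat CHAR('a))"
  unfolding canonical_char_def trace_index_def Let_def ..

lemma exp_two_pi_i_mod:
  assumes "(n::nat) > 0"
  shows "exp (2 * pi * \<i> * of_nat (a mod n) / of_nat n) = exp (2 * pi * \<i> * of_nat a / of_nat n)"
proof -
  have "a = a mod n + n * (a div n)"
    by simp
  then have "(of_nat a :: complex) = of_nat (a mod n) + of_nat n * of_nat (a div n)"
    by (metis of_nat_add of_nat_mult)
  then have "exp (2 * pi * \<i> * of_nat a / of_nat n)
      = exp (2 * pi * \<i> * of_nat (a mod n) / of_nat n) * exp (2 * pi * \<i> * of_nat (a div n))"
    using assms by (simp add: field_simps exp_add[symmetric])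
  moreover have "exp (2 * pi * \<i> * of_nat (a div n)) = 1"
    using complex_root_unity_eq_1[of 1 "a div n"] by simp
  ultimately show ?thesis
    by simp
qed

lemma canonical_char_add: "chi (x + y) = chi x * chi (y::'a::{finite,field})"
proof -
  let ?p = "CHAR('a)" and ?k = "trace_index x + trace_index y"
  have p0: "?p > 0"
    using one_less_CHAR_finite_field[where 'a='a] by simp
  have "?k = ?k mod ?p + ?p * (?k div ?p)"
    by simp
  then have "(of_nat ?k :: 'a) = of_nat (?k mod ?p) + of_nat ?p * of_nat (?k div ?p)"
    by (metis of_nat_add of_nat_mult)
  then have "(of_nat (?k mod ?p) :: 'a) = of_nat (trace_index (x + y))"
    using trace_index[of x] trace_index[of y] trace_index[of "x + y"] by (simp add: fq_trace_add)
  moreover have "?k mod ?p < ?p" "trace_index (x + y) < ?p"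
    using p0 trace_index[of "x + y"] by simp_all
  ultimately have index_add: "trace_index (x + y) = ?k mod ?p"
    using of_nat_eq_of_nat_less_CHAR_iff by metis
  show ?thesis
    unfolding canonical_char_eq_exp index_add exp_two_pi_i_mod[OF p0]
    by (simp add: exp_add[symmetric] add_divide_distrib distrib_left)
qed

lemma canonical_char_0 [simp]: "chi (0::'a::{finite,field}) = 1"
proof -
  have "chi (0::'a) * chi (0::'a) = chi (0::'a) * 1"
    using canonical_char_add[of "0::'a" 0] by simp
  moreover have "chi (0::'a) \<noteq> 0"
    by (simp add: canonical_char_eq_exp)
  ultimately show ?thesis
    by (metis mult_left_cancel)
qed

lemma ex_canonical_char_neq_1: "\<exists>x::'a::{finite,field}. chi x \<noteq> 1"
proof -
  obtain x :: 'a where "fq_trace x \<noteq> 0"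
    using ex_fq_trace_nonzero by blast
  then have "trace_index x \<noteq> 0" "trace_index x < CHAR('a)"
    using trace_index[of x] by (metis of_nat_0, blast)
  then have "\<not> CHAR('a) dvd trace_index x"
    by (auto dest: dvd_imp_le)
  then have "chi x \<noteq> 1"
    unfolding canonical_char_eq_exp
    using complex_root_unity_eq_1[of "CHAR('a)" "trace_index x"] one_less_CHAR_finite_field[where 'a='a]
    by simp
  then show ?thesis by blast
qed

lemma sum_canonical_char: "(\<Sum>x\<in>UNIV. chi (x::'a::{finite,field})) = 0"
proof -
  obtain a :: 'a where a: "chi a \<noteq> 1"
    using ex_canonical_char_neq_1 by blast
  have "(\<Sum>x\<in>UNIV. chi (x::'a)) = (\<Sum>x\<in>UNIV. chi (x + a))"
    by (rule sum.reindex_bij_witness[of _ "\<lambda>x. x + a" "\<lambda>x. x - a"]) auto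
  also have "\<dots> = (\<Sum>x\<in>UNIV. chi (x::'a)) * chi a"
    by (simp add: canonical_char_add sum_distrib_right)
  finally have "(\<Sum>x\<in>UNIV. chi (x::'a)) * 1 = (\<Sum>x\<in>UNIV. chi (x::'a)) * chi a"
    by simp
  then show ?thesis
    using a by (simp only: mult_cancel_left) auto
qed

lemma sum_canonical_char_mult:
  "(\<Sum>x\<in>UNIV. chi (c * (x::'a::{finite,field}))) = (if c = 0 then of_nat CARD('a) else 0)"
proof (cases "c = 0")
  case False
  have "(\<Sum>x\<in>UNIV. chi (x::'a)) = (\<Sum>x\<in>UNIV. chi (c * x))"
    by (rule sum.reindex_bij_witness[of _ "\<lambda>x. c * x" "\<lambda>x. x / c"]) (use False in auto)
  then show ?thesis
    using False sum_canonical_char[where 'a='a] by simp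
qed simp

lemma sum_nonzero_canonical_char_mult:
  "(\<Sum>x\<in>{x::'a::{finite,field}. x \<noteq> 0}. chi (c * x)) = (if c = 0 then of_nat CARD('a) else 0) - 1"
proof -
  have "(\<Sum>x\<in>UNIV. chi (c * x)) = chi (c * 0) + (\<Sum>x\<in>UNIV - {0}. chi (c * x))"
    by (rule sum.remove) simp_all
  moreover have "UNIV - {0::'a} = {x. x \<noteq> 0}"
    by auto
  ultimately show ?thesis
    using sum_canonical_char_mult[of c] by (simp add: eq_diff_eq)
qed

section \<open>Characteristic polynomial of a diagonalisable matrix\<close>

text \<open>The columns of \<open>V\<close> are eigenvectors of \<open>M\<close> and \<open>W\<close> is a left inverse of \<open>V\<close> up to the
  nonzero scalar \<open>N\<close>; hence \<open>V\<^sup>-\<^sup>1 (X I - M) V\<close> is diagonal.\<close>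
lemma char_poly_mat_eq_prod_eigenvalues:
  fixes M V W :: "complex^'n^'n" and eig :: "'n \<Rightarrow> complex" and N :: complex
  assumes eigen: "\<And>A B. (\<Sum>C\<in>UNIV. M$A$C * V$C$B) = V$A$B * eig B"
    and inverse: "\<And>B B'. (\<Sum>A\<in>UNIV. W$B$A * V$A$B') = (if B = B' then N else 0)"
    and "N \<noteq> 0"
  shows "char_poly_mat M = (\<Prod>B\<in>UNIV. [:- eig B, 1:])"
proof -
  define Kp :: "complex poly^'n^'n" where "Kp = (\<chi> i j. (if i = j then [:0, 1:] else 0) - [: M $ i $ j :])"
  define Vp :: "complex poly^'n^'n" where "Vp = (\<chi> i j. [: V $ i $ j :])"
  define Wp :: "complex poly^'n^'n" where "Wp = (\<chi> i j. [: W $ i $ j :])"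
  define Dp :: "complex poly^'n^'n" where "Dp = (\<chi> i j. if i = j then [:- eig i, 1:] else 0)"
  define Ip :: "complex poly^'n^'n" where "Ip = (\<chi> i j. if i = j then [:N:] else 0)"
  have "(Kp ** Vp) $ A $ B = (Vp ** Dp) $ A $ B" for A B
  proof -
    have "(Kp ** Vp) $ A $ B = (\<Sum>C\<in>UNIV. (if A = C then [:0, 1:] * [:V$C$B:] else 0) - [:M$A$C * V$C$B:])"
      unfolding matrix_matrix_mult_def Kp_def Vp_def
      by (simp, intro sum.cong refl) (auto simp: mult_to_poly algebra_simps)
    also have "\<dots> = [:V$A$B:] * [:- eig B, 1:]"
      by (simp add: sum_subtractf sum_to_poly eigen)
    also have "\<dots> = (Vp ** Dp) $ A $ B"
      by (simp add: matrix_matrix_mult_def Vp_def Dp_def if_distrib cong: if_cong)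
    finally show ?thesis .
  qed
  then have KV: "Kp ** Vp = Vp ** Dp"
    by (simp add: vec_eq_iff)
  have WV: "Wp ** Vp = Ip"
    using inverse by (simp add: vec_eq_iff matrix_matrix_mult_def Wp_def Vp_def Ip_def
        mult_to_poly sum_to_poly mult.commute)
  have "det Ip = [:N:] ^ CARD('n)"
    by (subst det_diagonal) (simp_all add: Ip_def)
  then have detWV: "det Wp * det Vp \<noteq> 0"
    using \<open>N \<noteq> 0\<close> by (simp add: WV[symmetric] det_mul)
  have "det Wp * det Vp * det Kp = det (Wp ** (Kp ** Vp))"
    by (simp add: det_mul mult_ac)
  also have "\<dots> = det ((Wp ** Vp) ** Dp)"
    by (simp add: KV matrix_mul_assoc)
  also have "\<dots> = det Wp * det Vp * det Dp"
    by (simp add: det_mul)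
  finally have "det Kp = det Dp"
    using detWV by (metis mult_left_cancel)
  moreover have "det Dp = (\<Prod>B\<in>UNIV. [:- eig B, 1:])"
    by (subst det_diagonal) (simp_all add: Dp_def)
  ultimately show ?thesis
    unfolding char_poly_mat_def Kp_def[symmetric] by simp
qed

definition mat2 :: "'a \<Rightarrow> 'a \<Rightarrow> 'a \<Rightarrow> 'a \<Rightarrow> 'a^2^2" where
  "mat2 a b c d = (\<chi> i j. if i = 1 then (if j = 1 then a else b) else (if j = 1 then c else d))"

lemma mat2_nth [simp]:
  "mat2 a b c d $ 1 $ 1 = a" "mat2 a b c d $ 1 $ 2 = b" "mat2 a b c d $ 2 $ 1 = c" "mat2 a b c d $ 2 $ 2 = d"
  by (simp_all add: mat2_def)

lemma mat2_eta [simp]: "mat2 (S$1$1) (S$1$2) (S$2$1) (S$2$2) = S"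
  by (simp add: vec_eq_iff forall_2)

lemma det_zero_mat2 [simp]: "det (0::'a::comm_ring_1^2^2) = 0"
  by (simp add: det_2)

lemma mat2_eq_iff:
  "(S::'a^2^2) = T \<longleftrightarrow> S$1$1 = T$1$1 \<and> S$1$2 = T$1$2 \<and> S$2$1 = T$2$1 \<and> S$2$2 = T$2$2"
  by (auto simp: vec_eq_iff forall_2)

lemma sum_UNIV_mat2:
  fixes f :: "'a::finite^2^2 \<Rightarrow> 'b::comm_monoid_add"
  shows "(\<Sum>S\<in>UNIV. f S) = (\<Sum>a\<in>UNIV. \<Sum>d\<in>UNIV. \<Sum>b\<in>UNIV. \<Sum>c\<in>UNIV. f (mat2 a b c d))"
proof -
  have "(\<Sum>S\<in>UNIV. f S) = (\<Sum>(a,d,b,c)\<in>UNIV. f (mat2 a b c d))"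
    by (rule sum.reindex_bij_witness[of _ "\<lambda>(a,d,b,c). mat2 a b c d" "\<lambda>S. (S$1$1, S$2$2, S$1$2, S$2$1)"])
       auto
  then show ?thesis
    by (simp add: sum.cartesian_product UNIV_Times_UNIV[symmetric] del: UNIV_Times_UNIV)
qed

lemma sum_sum_mult_sum_sum:
  fixes f g :: "'a \<Rightarrow> 'a \<Rightarrow> 'b::comm_semiring_0"
  shows "(\<Sum>a\<in>A. \<Sum>d\<in>D. \<Sum>b\<in>B. \<Sum>c\<in>C. f a d * g b c) = (\<Sum>a\<in>A. \<Sum>d\<in>D. f a d) * (\<Sum>b\<in>B. \<Sum>c\<in>C. g b c)"
  by (simp add: sum_distrib_right) (simp add: sum_distrib_left)

definition mat2_inner :: "'a::comm_ring_1^2^2 \<Rightarrow> 'a^2^2 \<Rightarrow> 'a" where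
  "mat2_inner S B = S$1$1*B$1$1 + S$1$2*B$1$2 + S$2$1*B$2$1 + S$2$2*B$2$2"

lemma mat2_inner_add_left: "mat2_inner (S + A) B = mat2_inner S B + mat2_inner A B"
  by (simp add: mat2_inner_def algebra_simps)

lemma mat2_inner_diff_right: "mat2_inner A (B - C) = mat2_inner A B - mat2_inner A C"
  by (simp add: mat2_inner_def algebra_simps)

lemma mat2_inner_zero_right [simp]: "mat2_inner A 0 = 0"
  by (simp add: mat2_inner_def)

section \<open>Character sums over two-by-two matrices\<close>

lemma sum_canonical_char_mat2_inner:
  fixes C :: "'a::{finite,field}^2^2"
  shows "(\<Sum>A\<in>UNIV. chi (mat2_inner A C)) = (if C = 0 then of_nat CARD('a) ^ 4 else 0)"
proof -
  have "(\<Sum>A\<in>UNIV. chi (mat2_inner A C)) =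
    (\<Sum>a\<in>UNIV. \<Sum>d\<in>UNIV. \<Sum>b\<in>UNIV. \<Sum>c\<in>UNIV.
      (chi (C$1$1 * a) * chi (C$2$2 * d)) * (chi (C$1$2 * b) * chi (C$2$1 * c)))"
    by (subst sum_UNIV_mat2) (simp add: mat2_inner_def canonical_char_add[symmetric] algebra_simps)
  also have "\<dots> = ((\<Sum>a\<in>UNIV. chi (C$1$1 * a)) * (\<Sum>d\<in>UNIV. chi (C$2$2 * d))) *
       ((\<Sum>b\<in>UNIV. chi (C$1$2 * b)) * (\<Sum>c\<in>UNIV. chi (C$2$1 * c)))"
    by (simp only: sum_sum_mult_sum_sum sum_product)
  also have "\<dots> = (if C = 0 then of_nat CARD('a) ^ 4 else 0)"
    unfolding sum_canonical_char_mult by (auto simp: mat2_eq_iff[of C 0] eval_nat_numeral mult_ac)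
  finally show ?thesis .
qed

text \<open>Summing over \<open>a\<close> first forces \<open>t d + x = 0\<close>, which leaves the single term \<open>d = -x/t\<close>.\<close>
lemma sum_canonical_char_hyperbolic:
  fixes t x w :: "'a::{finite,field}"
  shows "(\<Sum>a\<in>UNIV. \<Sum>d\<in>UNIV. chi (t*a*d + a*x + d*w)) =
     (if t = 0 then (if x = 0 \<and> w = 0 then of_nat CARD('a) ^ 2 else 0)
      else of_nat CARD('a) * chi (- (x * w) / t))"
proof -
  have "(\<Sum>a\<in>UNIV. \<Sum>d\<in>UNIV. chi (t*a*d + a*x + d*w)) =
        (\<Sum>d\<in>UNIV. chi (w * d) * (\<Sum>a\<in>UNIV. chi ((t*d + x) * a)))"
    by (subst sum.swap) (simp add: sum_distrib_left canonical_char_add[symmetric] algebra_simps)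
  also have "\<dots> = (\<Sum>d\<in>UNIV. chi (w * d) * (if t*d + x = 0 then of_nat CARD('a) else 0))"
    by (simp only: sum_canonical_char_mult)
  also have "\<dots> = (if t = 0 then (if x = 0 \<and> w = 0 then of_nat CARD('a) ^ 2 else 0)
      else of_nat CARD('a) * chi (- (x * w) / t))"
  proof (cases "t = 0")
    case True
    then show ?thesis
      by (auto simp: sum_distrib_right[symmetric] sum_canonical_char_mult power2_eq_square)
  next
    case False
    have "t*d + x = 0 \<longleftrightarrow> d = - x / t" for d
    proof -
      have "t*d + x = 0 \<longleftrightarrow> t*d = - x"
        using eq_neg_iff_add_eq_0[of "t*d" x] by simp
      also have "\<dots> \<longleftrightarrow> d = - x / t"
        using False eq_divide_eq[of d "-x" t] by (metis mult.commute)
      finally show ?thesis .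
    qed
    then have "(\<Sum>d\<in>UNIV. chi (w * d) * (if t*d + x = 0 then of_nat CARD('a) else 0))
        = (\<Sum>d\<in>UNIV. if d = - x / t then chi (w * d) * of_nat CARD('a) else 0)"
      by (intro sum.cong) auto
    also have "\<dots> = chi (- (x * w) / t) * of_nat CARD('a)"
      by (simp add: algebra_simps)
    finally show ?thesis
      using False by (simp add: mult.commute)
  qed
  finally show ?thesis .
qed

text \<open>Both \<open>t det S\<close> and \<open>\<langle>S, B\<rangle>\<close> decouple into the pairs \<open>(S\<^sub>1\<^sub>1, S\<^sub>2\<^sub>2)\<close> and \<open>(S\<^sub>1\<^sub>2, S\<^sub>2\<^sub>1)\<close>.\<close>
lemma sum_canonical_char_det_mat2_inner:
  fixes t \<delta> :: "'a::{finite,field}" and B :: "'a^2^2"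
  shows "(\<Sum>S\<in>UNIV. chi (t * (det S - \<delta>) + mat2_inner S B)) =
     (if t = 0 then (if B = 0 then of_nat CARD('a) ^ 4 else 0)
      else of_nat CARD('a) ^ 2 * chi (- t * \<delta> - det B / t))"
proof -
  define x y z w where "x = B$1$1" and "y = B$1$2" and "z = B$2$1" and "w = B$2$2"
  have "(\<Sum>S\<in>UNIV. chi (t * (det S - \<delta>) + mat2_inner S B)) =
     (\<Sum>a\<in>UNIV. \<Sum>d\<in>UNIV. \<Sum>b\<in>UNIV. \<Sum>c\<in>UNIV.
        chi (- t * \<delta>) * (chi (t*a*d + a*x + d*w) * chi ((-t)*b*c + b*y + c*z)))"
    by (subst sum_UNIV_mat2)
       (simp add: mat2_inner_def det_2 x_def y_def z_def w_def canonical_char_add[symmetric] algebra_simps)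
  also have "\<dots> = chi (- t * \<delta>) * (\<Sum>a\<in>UNIV. \<Sum>d\<in>UNIV. \<Sum>b\<in>UNIV. \<Sum>c\<in>UNIV.
        chi (t*a*d + a*x + d*w) * chi ((-t)*b*c + b*y + c*z))"
    by (simp add: sum_distrib_left)
  also have "\<dots> = chi (- t * \<delta>) * ((\<Sum>a\<in>UNIV. \<Sum>d\<in>UNIV. chi (t*a*d + a*x + d*w)) *
        (\<Sum>b\<in>UNIV. \<Sum>c\<in>UNIV. chi ((-t)*b*c + b*y + c*z)))"
    by (simp only: sum_sum_mult_sum_sum)
  also have "\<dots> = chi (- t * \<delta>) *
      ((if t = 0 then (if x = 0 \<and> w = 0 then of_nat CARD('a) ^ 2 else 0)
        else of_nat CARD('a) * chi (- (x * w) / t)) *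
       (if -t = 0 then (if y = 0 \<and> z = 0 then of_nat CARD('a) ^ 2 else 0)
        else of_nat CARD('a) * chi (- (y * z) / (-t))))"
    by (simp only: sum_canonical_char_hyperbolic)
  also have "\<dots> = (if t = 0 then (if B = 0 then of_nat CARD('a) ^ 4 else 0)
      else of_nat CARD('a) ^ 2 * chi (- t * \<delta> - det B / t))"
  proof (cases "t = 0")
    case True
    moreover have "B = 0 \<longleftrightarrow> x = 0 \<and> y = 0 \<and> z = 0 \<and> w = 0"
      by (simp add: mat2_eq_iff[of B 0] x_def y_def z_def w_def)
    ultimately show ?thesis
      by (auto simp: eval_nat_numeral mult_ac)
  next
    case False
    have split: "- t * \<delta> + (- (x * w) / t + - (y * z) / (- t)) = - t * \<delta> - det B / t"
      by (simp add: det_2 x_def y_def z_def w_def diff_divide_distrib)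
    have "chi (- t * \<delta>) * (of_nat CARD('a) * chi (- (x * w) / t) * (of_nat CARD('a) * chi (- (y * z) / (-t))))
        = of_nat CARD('a) ^ 2 * (chi (- t * \<delta>) * (chi (- (x * w) / t) * chi (- (y * z) / (-t))))"
      by (simp add: power2_eq_square mult_ac)
    also have "\<dots> = of_nat CARD('a) ^ 2 * chi (- t * \<delta> - det B / t)"
      by (simp only: canonical_char_add[symmetric] split)
    finally show ?thesis
      using False by simp
  qed
  finally show ?thesis .
qed

lemma sum_det_eq_canonical_char_mat2_inner:
  fixes \<delta> :: "'a::{finite,field}" and B :: "'a^2^2"
  shows "(\<Sum>S\<in>UNIV. if det S = \<delta> then chi (mat2_inner S B) else 0) =
    (if B = 0 then of_nat CARD('a) ^ 3 else 0) +
    of_nat CARD('a) * (\<Sum>t\<in>{t. t \<noteq> 0}. chi (- t * \<delta> - det B / t))"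
proof -
  let ?q = "of_nat CARD('a) :: complex"
  have q0: "?q \<noteq> 0"
    by simp
  have "(\<Sum>S\<in>UNIV. if det S = \<delta> then chi (mat2_inner S B) else 0) =
      (\<Sum>S\<in>UNIV. (1 / ?q) * (\<Sum>t\<in>UNIV. chi (t * (det S - \<delta>))) * chi (mat2_inner S B))"
  proof (intro sum.cong refl)
    fix S :: "'a^2^2"
    have "(if det S = \<delta> then 1 else 0) = (1 / ?q) * (\<Sum>t\<in>UNIV. chi (t * (det S - \<delta>)))"
      using sum_canonical_char_mult[of "det S - \<delta>"] by (simp add: mult.commute)
    then show "(if det S = \<delta> then chi (mat2_inner S B) else 0) =
        (1 / ?q) * (\<Sum>t\<in>UNIV. chi (t * (det S - \<delta>))) * chi (mat2_inner S B)"
      by (metis mult_1 mult_zero_left)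
  qed
  also have "\<dots> = (1 / ?q) * (\<Sum>t\<in>UNIV. \<Sum>S\<in>UNIV. chi (t * (det S - \<delta>) + mat2_inner S B))"
    by (subst sum.swap) (simp add: sum_distrib_left sum_distrib_right canonical_char_add mult_ac)
  also have "\<dots> = (1 / ?q) * (\<Sum>t\<in>UNIV. (if t = 0 then (if B = 0 then ?q ^ 4 else 0)
      else ?q ^ 2 * chi (- t * \<delta> - det B / t)))"
    by (simp only: sum_canonical_char_det_mat2_inner)
  also have "(\<Sum>t\<in>UNIV. (if t = 0 then (if B = 0 then ?q ^ 4 else 0)
      else ?q ^ 2 * chi (- t * \<delta> - det B / t))) =
      (if B = 0 then ?q ^ 4 else 0) + (\<Sum>t\<in>{t. t \<noteq> 0}. ?q ^ 2 * chi (- t * \<delta> - det B / t))"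
  proof -
    have "UNIV - {0::'a} = {t. t \<noteq> 0}"
      by auto
    then show ?thesis
      by (subst sum.remove[of UNIV 0]) simp_all
  qed
  also have "(1 / ?q) * ((if B = 0 then ?q ^ 4 else 0) +
      (\<Sum>t\<in>{t. t \<noteq> 0}. ?q ^ 2 * chi (- t * \<delta> - det B / t))) =
      (if B = 0 then ?q ^ 3 else 0) + ?q * (\<Sum>t\<in>{t. t \<noteq> 0}. chi (- t * \<delta> - det B / t))"
    using q0 by (simp add: sum_distrib_left[symmetric] field_simps power2_eq_square eval_nat_numeral)
  finally show ?thesis .
qed

lemma card_det_eq:
  "of_nat (card {B::'a::{finite,field}^2^2. det B = \<delta>}) =
     of_nat CARD('a) ^ 3 + of_nat CARD('a) * ((if \<delta> = 0 then of_nat CARD('a) else 0) - (1::complex))"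
proof -
  have "of_nat (card {B::'a^2^2. det B = \<delta>}) = (\<Sum>S\<in>UNIV. if det S = \<delta> then chi (mat2_inner S 0) else 0)"
    by (simp add: sum.If_cases)
  also have "\<dots> = of_nat CARD('a) ^ 3 + of_nat CARD('a) * (\<Sum>t\<in>{t::'a. t \<noteq> 0}. chi ((- \<delta>) * t))"
    unfolding sum_det_eq_canonical_char_mat2_inner by (simp add: mult.commute)
  also have "(\<Sum>t\<in>{t::'a. t \<noteq> 0}. chi ((- \<delta>) * t)) = (if \<delta> = 0 then of_nat CARD('a) else 0) - 1"
    using sum_nonzero_canonical_char_mult[of "- \<delta>"] by simp
  finally show ?thesis .
qed

lemma card_det_eq_nonzero:
  assumes "\<delta> \<noteq> 0"
  shows "card {B::'a::{finite,field}^2^2. det B = \<delta>} = CARD('a) ^ 3 - CARD('a)"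
proof -
  have "CARD('a) \<le> CARD('a) ^ 3"
    by (rule self_le_power) (auto simp: Suc_le_eq)
  then have "(of_nat (card {B::'a^2^2. det B = \<delta>}) :: complex) = of_nat (CARD('a) ^ 3 - CARD('a))"
    using card_det_eq[of \<delta>] assms by (simp add: of_nat_diff algebra_simps)
  then show ?thesis
    using of_nat_eq_iff by blast
qed

lemma card_det_eq_0:
  "card {B::'a::{finite,field}^2^2. det B = 0} = CARD('a) ^ 3 + CARD('a) ^ 2 - CARD('a)"
proof -
  have "CARD('a) \<le> CARD('a) ^ 3 + CARD('a) ^ 2"
    by (metis le_add2 power2_nat_le_imp_le)
  then have "(of_nat (card {B::'a^2^2. det B = 0}) :: complex) = of_nat (CARD('a) ^ 3 + CARD('a) ^ 2 - CARD('a))"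
    using card_det_eq[of "0::'a"] by (simp add: of_nat_diff algebra_simps power2_eq_square)
  then show ?thesis
    using of_nat_eq_iff by blast
qed

lemma prod_UNIV_mat2_by_det:
  fixes F :: "'a::{finite,field}^2^2 \<Rightarrow> 'b::comm_monoid_mult"
  assumes F: "\<And>B. B \<noteq> 0 \<Longrightarrow> F B = G (det B)"
  shows "(\<Prod>B\<in>UNIV. F B) = F 0 * G 0 ^ (CARD('a) ^ 3 + CARD('a) ^ 2 - CARD('a) - 1)
            * (\<Prod>\<delta>\<in>{\<delta>. \<delta> \<noteq> 0}. G \<delta> ^ (CARD('a) ^ 3 - CARD('a)))"
proof -
  define Z where "Z = {B::'a^2^2. det B = 0}"
  have "0 \<in> Z"
    by (simp add: Z_def)
  have "(\<Prod>B\<in>UNIV. F B) = prod F (UNIV - Z) * prod F Z"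
    by (rule prod.subset_diff) auto
  also have "prod F Z = F 0 * prod F (Z - {0})"
    using \<open>0 \<in> Z\<close> by (rule prod.remove[OF finite])
  also have "prod F (Z - {0}) = G 0 ^ card (Z - {0})"
    by (simp add: F Z_def)
  also have "card (Z - {0}) = CARD('a) ^ 3 + CARD('a) ^ 2 - CARD('a) - 1"
    using \<open>0 \<in> Z\<close> card_det_eq_0[where 'a='a] by (simp add: Z_def)
  also have "prod F (UNIV - Z) = (\<Prod>\<delta>\<in>{\<delta>. \<delta> \<noteq> 0}. prod F {B. B \<in> UNIV - Z \<and> det B = \<delta>})"
    by (rule prod.group[symmetric]) (auto simp: Z_def)
  also have "\<dots> = (\<Prod>\<delta>\<in>{\<delta>. \<delta> \<noteq> 0}. G \<delta> ^ (CARD('a) ^ 3 - CARD('a)))"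
  proof (intro prod.cong refl)
    fix \<delta> :: 'a
    assume "\<delta> \<in> {\<delta>. \<delta> \<noteq> 0}"
    then have "{B. B \<in> UNIV - Z \<and> det B = \<delta>} = {B. det B = \<delta>}" "\<And>B::'a^2^2. det B = \<delta> \<Longrightarrow> B \<noteq> 0"
      by (auto simp: Z_def)
    then show "prod F {B. B \<in> UNIV - Z \<and> det B = \<delta>} = G \<delta> ^ (CARD('a) ^ 3 - CARD('a))"
      using card_det_eq_nonzero[of \<delta>] \<open>\<delta> \<in> _\<close> by (simp add: F)
  qed
  finally show ?thesis
    by (simp only: mult_ac)
qed

section \<open>Spectrum of the special unit-graph\<close>

definition kloosterman :: "'a::{finite,field} \<Rightarrow> complex" where
  "kloosterman \<Delta> = (\<Sum>\<alpha>\<in>{\<alpha>::'a. \<alpha> \<noteq> 0}. chi (\<alpha> + \<Delta> * inverse \<alpha>))"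

lemma kloosterman_0 [simp]: "kloosterman (0::'a::{finite,field}) = -1"
  using sum_nonzero_canonical_char_mult[of "1::'a"] by (simp add: kloosterman_def)

definition special_unit_eigenvalue :: "'a::{finite,field}^2^2 \<Rightarrow> complex" where
  "special_unit_eigenvalue B = (\<Sum>S\<in>UNIV. if det S = 1 then chi (mat2_inner S B) else 0)"

lemma special_unit_eigenvalue_eq:
  "special_unit_eigenvalue B =
     (if B = 0 then of_nat CARD('a) ^ 3 else 0) + of_nat CARD('a) * kloosterman (det (B::'a::{finite,field}^2^2))"
proof -
  have "(\<Sum>t\<in>{t::'a. t \<noteq> 0}. chi (- t * 1 - \<Delta> / t)) = kloosterman \<Delta>" for \<Delta>
    unfolding kloosterman_def
    by (rule sum.reindex_bij_witness[of _ uminus uminus]) (auto simp: divide_inverse)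
  then show ?thesis
    unfolding special_unit_eigenvalue_def sum_det_eq_canonical_char_mat2_inner by simp
qed

text \<open>The eigenvector for \<open>B\<close> is the character \<open>A \<mapsto> \<chi>(\<langle>A, B\<rangle>)\<close>; substituting \<open>C = S + A\<close>
  pulls the factor \<open>\<chi>(\<langle>A, B\<rangle>)\<close> out of the sum over the neighbours \<open>C\<close> of \<open>A\<close>.\<close>
lemma char_poly_special_unit_adj:
  "char_poly_mat (special_unit_adj :: complex ^ ('a::{finite,field} ^ 2 ^ 2) ^ ('a ^ 2 ^ 2)) =
     (\<Prod>B\<in>UNIV. [:- special_unit_eigenvalue (B::'a^2^2), 1:])"
proof (rule char_poly_mat_eq_prod_eigenvalues[where V = "\<chi> A B. chi (mat2_inner A B)"
      and W = "\<chi> B A. chi (- mat2_inner A B)" and N = "of_nat CARD('a) ^ 4"])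
  fix A B :: "'a^2^2"
  have "(\<Sum>C\<in>UNIV. special_unit_adj $ A $ C * (\<chi> A B. chi (mat2_inner A B)) $ C $ B)
      = (\<Sum>C\<in>UNIV. if det (C - A) = 1 then chi (mat2_inner C B) else 0)"
    by (intro sum.cong refl) (simp add: special_unit_adj_def)
  also have "\<dots> = (\<Sum>S\<in>UNIV. if det S = 1 then chi (mat2_inner (S + A) B) else 0)"
    by (rule sum.reindex_bij_witness[of _ "\<lambda>S. S + A" "\<lambda>S. S - A"]) auto
  also have "\<dots> = chi (mat2_inner A B) * special_unit_eigenvalue B"
    by (simp add: special_unit_eigenvalue_def sum_distrib_left mat2_inner_add_left
        canonical_char_add mult.commute if_distrib cong: if_cong)
  finally show "(\<Sum>C\<in>UNIV. special_unit_adj $ A $ C * (\<chi> A B. chi (mat2_inner A B)) $ C $ B) =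
      (\<chi> A B. chi (mat2_inner A B)) $ A $ B * special_unit_eigenvalue B"
    by simp
next
  fix B B' :: "'a^2^2"
  show "(\<Sum>A\<in>UNIV. (\<chi> B A. chi (- mat2_inner A B)) $ B $ A * (\<chi> A B. chi (mat2_inner A B)) $ A $ B')
      = (if B = B' then of_nat CARD('a) ^ 4 else 0)"
  proof -
    have "(\<Sum>A\<in>UNIV. (\<chi> B A. chi (- mat2_inner A B)) $ B $ A * (\<chi> A B. chi (mat2_inner A B)) $ A $ B')
        = (\<Sum>A\<in>UNIV. chi (mat2_inner A (B' - B)))"
      by (intro sum.cong refl) (simp add: mat2_inner_diff_right canonical_char_add[symmetric])
    then show ?thesis
      by (simp add: sum_canonical_char_mat2_inner)
  qed
qed simp

theorem theorem3p12:
  fixes T :: "'a::{finite,field} itself"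
  defines "q \<equiv> CARD('a)"
  shows "char_poly_mat (special_unit_adj :: complex ^ ('a ^ 2 ^ 2) ^ ('a ^ 2 ^ 2)) =
           [: - (of_nat q ^ 3 - of_nat q), 1 :]
         * [: of_nat q, 1 :] ^ (q ^ 3 + q ^ 2 - q - 1)
         * (\<Prod>\<delta>\<in>{\<delta>::'a. \<delta> \<noteq> 0}.
              [: - (of_nat q * (\<Sum>\<alpha>\<in>{\<alpha>::'a. \<alpha> \<noteq> 0}. canonical_char (\<alpha> + \<delta> * inverse \<alpha>))), 1 :]
                ^ (q ^ 3 - q))"
proof -
  have "char_poly_mat (special_unit_adj :: complex ^ ('a ^ 2 ^ 2) ^ ('a ^ 2 ^ 2)) =
      (\<Prod>B\<in>UNIV. [:- special_unit_eigenvalue (B::'a^2^2), 1:])"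
    by (rule char_poly_special_unit_adj)
  also have "\<dots> = [:- special_unit_eigenvalue (0::'a^2^2), 1:]
      * [:- (of_nat q * kloosterman (0::'a)), 1:] ^ (q ^ 3 + q ^ 2 - q - 1)
      * (\<Prod>\<delta>\<in>{\<delta>::'a. \<delta> \<noteq> 0}. [:- (of_nat q * kloosterman \<delta>), 1:] ^ (q ^ 3 - q))"
    unfolding q_def by (rule prod_UNIV_mat2_by_det) (simp add: special_unit_eigenvalue_eq)
  also have "[:- special_unit_eigenvalue (0::'a^2^2), 1:] = [: - (of_nat q ^ 3 - of_nat q), 1 :]"
    by (simp add: special_unit_eigenvalue_eq q_def)
  also have "[:- (of_nat q * kloosterman (0::'a)), 1:] = [: of_nat q, 1 :]"
    by simp
  finally show ?thesis
    by (simp only: kloosterman_def)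
qed

end
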